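(* Every positive tight program $P$ can be isomorphically represented by a cascade program product of reset programs; that is, there exist $k\ge1$, a finite nonempty set $\mathcal I_{\mathbf P}$ and a feedforward function $\psi_{\mathbf P}$ such that the product $\mathbf P=R\ltimes\dots\ltimes R\,[\mathcal I_{\mathbf P},\psi_{\mathbf P}]$ ($k$ factors, each the reset program $R$) satisfies $\Psi_P\in\mathbf I\mathbf S(\{\Psi_{\mathbf P}\})$.
   Context: Programs: a (normal logic) program $P$ over a finite nonempty set of atoms $\Gamma_P$ is a finite nonempty set of rules $a\leftarrow b_1,\dots,b_k,\mathrm{not}\,b_{k+1},\dots,\mathrm{not}\,b_m$ ($m\ge k\ge 0$, atoms in $\Gamma_P$); for such a rule $r$, $H(r)=a$, $B^+(r)=\{b_1,\dots,b_k\}$, $B^-(r)=\{b_{k+1},\dots,b_m\}$. $P$ is positive if $B^-(r)=\emptyset$ for every $r\in P$. $P$ is tight if there is a map $\ell:\Gamma_P\to\mathbb Z_{\ge0}$ with $\ell(H(r))>\ell(b)$ for every rule $r\in P$ and every $b\in B^+(r)$. $\mathcal I_P$ is the power set of $\Gamma_P$. $\Psi_P:\mathcal I_P\times\mathcal I_P\to\mathcal I_P$ is $\Psi_P(I,J)=\{H(r): r\in P,\ B^+(r)\subseteq I,\ B^-(r)\cap J=\emptyset\}$. The characteristic automaton of $P$ is $\langle \mathcal I_P,\mathcal I_P,\Psi_P\rangle$, also denoted $\Psi_P$. Reset program: $R$ over $\{1\}$ consists of the single rule $1\leftarrow\mathrm{not}\,1$ (so $\Psi_R(I,J)=\{1\}$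 if $J=\emptyset$ and $\emptyset$ otherwise). Automata: an automaton $\langle Q,\Sigma,\delta\rangle$ has finite state set $Q$, finite nonempty input alphabet $\Sigma$, and $\delta:Q\times\Sigma\to Q$. $\langle Q',\Sigma',\delta'\rangle$ is a subautomaton of $\langle Q,\Sigma,\delta\rangle$ if $Q'\subseteq Q$, $\Sigma'\subseteq\Sigma$, $\delta(Q'\times\Sigma')\subseteq Q'$ and $\delta'=\delta|_{Q'\times\Sigma'}$. An isomorphism onto $\langle Q',\Sigma',\delta'\rangle$ is a pair of bijections $h_1:Q\to Q'$, $h_2:\Sigma\to\Sigma'$ with $h_1(\delta(q,x))=\delta'(h_1(q),h_2(x))$ for all $q,x$. $\mathbf S(\mathcal A)$, $\mathbf I(\mathcal A)$ denote the classes of subautomata and isomorphic images of automata in $\mathcal A$. Cascade program product: let $P_1,\dots,P_k$ ($k\ge1$) be programs and $\mathcal I_{\mathbf P}$ a finite nonempty set. A feedforward function is $\psi_{\mathbf P}=(\psi_{\mathbf P,1},\dots,\psi_{\mathbf P,k})$ with $\psi_{\mathbf P,i}:(\mathcal I_{P_1}\times\dots\times\mathcal I_{P_k})\times\mathcal I_{\mathbf P}\to\mathcal I_{P_i}$ not depending on its $j$-th component for any $j\ge i$. The product $\mathbf P=P_1\ltimes\dots\ltimes P_k[\mathcal I_{\mathbf P},\psi_{\mathbf P}]$ has characteristic automaton $\Psi_{\mathbf P}=\langle \mathcal I_{P_1}\times\dots\times\mathcal I_{P_k},\ \mathcal I_{\mathbf P},\ \Psi_{\mathbf P}\rangle$ with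 $\Psi_{\mathbf P}((I_1,\dots,I_k),\mathbf J)=\big(\Psi_{P_1}(I_1,\psi_{\mathbf P,1}(\mathbf J)),\dots,\Psi_{P_k}(I_k,\psi_{\mathbf P,k}((I_1,\dots,I_{k-1}),\mathbf J))\big)$. The product isomorphically represents $P$ if $\Psi_P\in\mathbf I\mathbf S(\{\Psi_{\mathbf P}\})$. *)

theory Defs
  imports Main
begin

text \<open>A rule a <- b1,...,bk, not b(k+1),...,not bm is a triple (H, B+, B-).\<close>
type_synonym 'a rule = "'a \<times> 'a set \<times> 'a set"

definition H :: "'a rule \<Rightarrow> 'a" where "H r = fst r"
definition Bpos :: "'a rule \<Rightarrow> 'a set" where "Bpos r = fst (snd r)"
definition Bneg :: "'a rule \<Rightarrow> 'a set" where "Bneg r = snd (snd r)"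

definition program :: "'a set \<Rightarrow> 'a rule set \<Rightarrow> bool" where
  "program \<Gamma> P \<longleftrightarrow> finite \<Gamma> \<and> \<Gamma> \<noteq> {} \<and> finite P \<and> P \<noteq> {} \<and>
     (\<forall>r\<in>P. H r \<in> \<Gamma> \<and> Bpos r \<subseteq> \<Gamma> \<and> Bneg r \<subseteq> \<Gamma>)"

definition positive :: "'a rule set \<Rightarrow> bool" where
  "positive P \<longleftrightarrow> (\<forall>r\<in>P. Bneg r = {})"

definition tight :: "'a rule set \<Rightarrow> bool" where
  "tight P \<longleftrightarrow> (\<exists>lv :: 'a \<Rightarrow> nat. \<forall>r\<in>P. \<forall>b\<in>Bpos r. lv (H r) > lv b)"

definition Psi :: "'a rule set \<Rightarrow> 'a set \<Rightarrow> 'a set \<Rightarrow> 'a set" where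
  "Psi P I J = {H r | r. r \<in> P \<and> Bpos r \<subseteq> I \<and> Bneg r \<inter> J = {}}"

definition reset_prog :: "nat set \<times> nat rule set" where
  "reset_prog = ({1}, {(1, {}, {1})})"

definition in_IS ::
  "'q set \<Rightarrow> 's set \<Rightarrow> ('q \<Rightarrow> 's \<Rightarrow> 'q) \<Rightarrow> 'p set \<Rightarrow> 't set \<Rightarrow> ('p \<Rightarrow> 't \<Rightarrow> 'p) \<Rightarrow> bool" where
  "in_IS Q \<Sigma> \<delta> Q2 \<Sigma>2 \<delta>2 \<longleftrightarrow>
     (\<exists>Q' \<Sigma>'. Q' \<subseteq> Q2 \<and> \<Sigma>' \<subseteq> \<Sigma>2 \<and> \<Sigma>' \<noteq> {} \<and>
        (\<forall>q\<in>Q'. \<forall>x\<in>\<Sigma>'. \<delta>2 q x \<in> Q') \<and>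
        (\<exists>h1 h2. bij_betw h1 Q Q' \<and> bij_betw h2 \<Sigma> \<Sigma>' \<and>
           (\<forall>q\<in>Q. \<forall>x\<in>\<Sigma>. h1 (\<delta> q x) = \<delta>2 (h1 q) (h2 x))))"

text \<open>Cascade product of a list of programs Ps = [P_1,...,P_k] (0-indexed here).\<close>
definition cascade_states :: "('a set \<times> 'a rule set) list \<Rightarrow> 'a set list set" where
  "cascade_states Ps = {s. length s = length Ps \<and> (\<forall>i<length Ps. s ! i \<subseteq> fst (Ps ! i))}"

definition feedforward ::
  "('a set \<times> 'a rule set) list \<Rightarrow> 'b set \<Rightarrow> (nat \<Rightarrow> 'a set list \<Rightarrow> 'b \<Rightarrow> 'a set) \<Rightarrow> bool" where
  "feedforward Ps IP \<psi> \<longleftrightarrow>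
     (\<forall>i<length Ps. \<forall>s\<in>cascade_states Ps. \<forall>x\<in>IP. \<psi> i s x \<subseteq> fst (Ps ! i)) \<and>
     (\<forall>i<length Ps. \<forall>s\<in>cascade_states Ps. \<forall>s'\<in>cascade_states Ps. \<forall>x\<in>IP.
        take i s = take i s' \<longrightarrow> \<psi> i s x = \<psi> i s' x)"

definition cascade_delta ::
  "('a set \<times> 'a rule set) list \<Rightarrow> (nat \<Rightarrow> 'a set list \<Rightarrow> 'b \<Rightarrow> 'a set) \<Rightarrow> 'a set list \<Rightarrow> 'b \<Rightarrow> 'a set list" where
  "cascade_delta Ps \<psi> s x = map (\<lambda>i. Psi (snd (Ps ! i)) (s ! i) (\<psi> i s x)) [0..<length Ps]"

end

theory Submission
  imports Defs
begin

text \<open>Since P is positive, \<open>Psi P I J\<close> does not depend on J, so \<open>Psi P\<close> is a transition function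
  on states alone. List the atoms by nondecreasing tightness level and let the i-th reset
  component record whether the i-th atom is true. The next value of that atom is decided by
  rules whose positive bodies consist of atoms of strictly lower level, i.e. of atoms read by
  earlier components, so a feedforward function can drive each reset to exactly that value.\<close>

lemma Psi_reset: "Psi (snd reset_prog) S J = (if 1 \<in> J then {} else {1})"
  by (auto simp: reset_prog_def Psi_def H_def Bpos_def Bneg_def)

lemma Psi_positive:
  assumes "positive P"
  shows "Psi P I J = {H r | r. r \<in> P \<and> Bpos r \<subseteq> I}"
  using assms unfolding Psi_def positive_def by blast

lemma Psi_subset_atoms:
  assumes "program \<Gamma> P"
  shows "Psi P I J \<subseteq> \<Gamma>"
  using assms by (auto simp: program_def Psi_def)

lemma cascade_states_replicate_reset:
  "cascade_states (replicate n reset_prog) = {s. length s = n \<and> (\<forall>i<n. s ! i \<subseteq> {1})}"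
  by (auto simp: cascade_states_def reset_prog_def)

lemma in_IS_intro:
  assumes "inj_on h1 Q" and "h1 ` Q \<subseteq> Q2"
    and "bij_betw h2 \<Sigma> \<Sigma>'" and "\<Sigma>' \<subseteq> \<Sigma>2" and "\<Sigma> \<noteq> {}"
    and closed: "\<And>q x. q \<in> Q \<Longrightarrow> x \<in> \<Sigma> \<Longrightarrow> \<delta> q x \<in> Q"
    and hom: "\<And>q x. q \<in> Q \<Longrightarrow> x \<in> \<Sigma> \<Longrightarrow> h1 (\<delta> q x) = \<delta>2 (h1 q) (h2 x)"
  shows "in_IS Q \<Sigma> \<delta> Q2 \<Sigma>2 \<delta>2"
  unfolding in_IS_def
proof (intro exI conjI)
  have image: "h2 ` \<Sigma> = \<Sigma>'" using assms(3) by (simp add: bij_betw_def)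
  then show "\<Sigma>' \<noteq> {}" using assms(5) by blast
  show "\<forall>q'\<in>h1 ` Q. \<forall>x'\<in>\<Sigma>'. \<delta>2 q' x' \<in> h1 ` Q"
  proof (intro ballI)
    fix q' x' assume "q' \<in> h1 ` Q" "x' \<in> \<Sigma>'"
    then obtain q x where "q \<in> Q" "x \<in> \<Sigma>" "q' = h1 q" "x' = h2 x" using image by blast
    then show "\<delta>2 q' x' \<in> h1 ` Q" using closed hom by (metis imageI)
  qed
  show "bij_betw h1 Q (h1 ` Q)" using assms(1) by (simp add: bij_betw_def)
  show "\<forall>q\<in>Q. \<forall>x\<in>\<Sigma>. h1 (\<delta> q x) = \<delta>2 (h1 q) (h2 x)" using hom by blast
qed (fact assms)+

definition level_ordered :: "'a list \<Rightarrow> 'a rule set \<Rightarrow> bool" where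
  "level_ordered ys P \<longleftrightarrow>
     (\<forall>r\<in>P. \<forall>i<length ys. \<forall>j<length ys. ys ! i = H r \<longrightarrow> ys ! j \<in> Bpos r \<longrightarrow> j < i)"

lemma tight_level_ordered:
  assumes "finite \<Gamma>" and "tight P"
  obtains ys where "set ys = \<Gamma>" and "level_ordered ys P"
proof -
  obtain lv :: "'a \<Rightarrow> nat" where lv: "\<And>r b. r \<in> P \<Longrightarrow> b \<in> Bpos r \<Longrightarrow> lv b < lv (H r)"
    using assms(2) by (auto simp: tight_def)
  obtain xs where xs: "set xs = \<Gamma>" using finite_list[OF assms(1)] by blast
  define ys where "ys = sort_key lv xs"
  have sorted: "sorted (map lv ys)" by (simp add: ys_def)
  have "level_ordered ys P"
    unfolding level_ordered_def
  proof (intro ballI allI impI)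
    fix r i j assume "r \<in> P" "i < length ys" "j < length ys" "ys ! i = H r" "ys ! j \<in> Bpos r"
    then have "lv (ys ! j) < lv (ys ! i)" using lv by metis
    then show "j < i"
      using sorted_nth_mono[OF sorted, of i j] \<open>i < length ys\<close> \<open>j < length ys\<close>
      by (cases "i \<le> j") auto
  qed
  moreover have "set ys = \<Gamma>" using xs by (simp add: ys_def)
  ultimately show thesis using that by blast
qed

definition char_vector :: "'a list \<Rightarrow> 'a set \<Rightarrow> nat set list" where
  "char_vector ys I = map (\<lambda>a. if a \<in> I then {1} else {}) ys"

lemma char_vector_nth: "i < length ys \<Longrightarrow> char_vector ys I ! i = (if ys ! i \<in> I then {1} else {})"
  by (simp add: char_vector_def)

lemma char_vector_in_cascade_states:
  "char_vector ys I \<in> cascade_states (replicate (length ys) reset_prog)"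
  by (simp add: cascade_states_replicate_reset char_vector_def)

lemma inj_on_char_vector: "inj_on (char_vector ys) (Pow (set ys))"
proof (rule inj_onI)
  fix I J assume subsets: "I \<in> Pow (set ys)" "J \<in> Pow (set ys)"
    and eq: "char_vector ys I = char_vector ys J"
  have "\<forall>a\<in>set ys. (if a \<in> I then {1::nat} else {}) = (if a \<in> J then {1} else {})"
    using eq unfolding char_vector_def map_eq_conv by simp
  then have "\<forall>a\<in>set ys. a \<in> I \<longleftrightarrow> a \<in> J" by (metis empty_not_insert)
  then show "I = J" using subsets by blast
qed

definition prefix_derives :: "'a list \<Rightarrow> 'a rule set \<Rightarrow> nat \<Rightarrow> nat set list \<Rightarrow> bool" where
  "prefix_derives ys P i t \<longleftrightarrow>
     (\<exists>r\<in>P. H r = ys ! i \<and> (\<forall>b\<in>Bpos r. \<exists>j<i. b = ys ! j \<and> t ! j = {1}))"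

text \<open>The reset program outputs \<open>{1}\<close> exactly on input \<open>{}\<close>, hence the inverted test.\<close>

definition reset_feedforward :: "'a list \<Rightarrow> 'a rule set \<Rightarrow> nat \<Rightarrow> nat set list \<Rightarrow> 'b \<Rightarrow> nat set" where
  "reset_feedforward ys P i s x = (if prefix_derives ys P i (take i s) then {} else {1})"

lemma feedforward_reset_feedforward:
  "feedforward (replicate n reset_prog) IP (reset_feedforward ys P)"
  by (auto simp: feedforward_def reset_feedforward_def reset_prog_def)

lemma prefix_derives_char_vector_iff:
  assumes "level_ordered ys P" and "\<forall>r\<in>P. Bpos r \<subseteq> set ys" and "positive P"
    and "i < length ys"
  shows "prefix_derives ys P i (take i (char_vector ys I)) \<longleftrightarrow> ys ! i \<in> Psi P I J"
proof
  assume "prefix_derives ys P i (take i (char_vector ys I))"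
  then obtain r where r: "r \<in> P" "H r = ys ! i"
    and body: "\<forall>b\<in>Bpos r. \<exists>j<i. b = ys ! j \<and> take i (char_vector ys I) ! j = {1}"
    by (auto simp: prefix_derives_def)
  have "Bpos r \<subseteq> I"
  proof
    fix b assume "b \<in> Bpos r"
    then obtain j where "j < i" "b = ys ! j" "char_vector ys I ! j = {1}" using body by auto
    then show "b \<in> I" using assms(4) by (auto simp: char_vector_nth split: if_splits)
  qed
  then have "H r \<in> Psi P I J" unfolding Psi_positive[OF assms(3)] using r(1) by blast
  then show "ys ! i \<in> Psi P I J" using r(2) by simp
next
  assume "ys ! i \<in> Psi P I J"
  then obtain r where r: "r \<in> P" "H r = ys ! i" "Bpos r \<subseteq> I"
    using Psi_positive[OF assms(3)] by auto
  have "\<exists>j<i. b = ys ! j \<and> take i (char_vector ys I) ! j = {1}" if b: "b \<in> Bpos r" for b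
  proof -
    obtain j where j: "j < length ys" "b = ys ! j"
      using b r(1) assms(2) by (metis in_mono in_set_conv_nth)
    have "j < i" using assms(1,4) r j b by (auto simp: level_ordered_def)
    then show ?thesis using j b r(3) \<open>i < length ys\<close> by (intro exI[of _ j]) (auto simp: char_vector_nth)
  qed
  then show "prefix_derives ys P i (take i (char_vector ys I))"
    using r by (auto simp: prefix_derives_def)
qed

lemma cascade_delta_char_vector:
  assumes "level_ordered ys P" and "\<forall>r\<in>P. Bpos r \<subseteq> set ys" and "positive P"
  shows "cascade_delta (replicate (length ys) reset_prog) (reset_feedforward ys P) (char_vector ys I) x
         = char_vector ys (Psi P I J)"
proof (rule nth_equalityI)
  fix i assume "i < length (cascade_delta (replicate (length ys) reset_prog)
                                (reset_feedforward ys P) (char_vector ys I) x)"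
  then have i: "i < length ys" by (simp add: cascade_delta_def)
  show "cascade_delta (replicate (length ys) reset_prog) (reset_feedforward ys P) (char_vector ys I) x ! i
        = char_vector ys (Psi P I J) ! i"
    using i prefix_derives_char_vector_iff[OF assms i]
    by (simp add: cascade_delta_def Psi_reset reset_feedforward_def char_vector_nth)
qed (simp add: cascade_delta_def char_vector_def)

lemma in_IS_reset_cascade:
  assumes "program \<Gamma> P" and "positive P" and "set ys = \<Gamma>" and "level_ordered ys P"
    and "bij_betw h2 (Pow \<Gamma>) IP"
  shows "in_IS (Pow \<Gamma>) (Pow \<Gamma>) (Psi P)
           (cascade_states (replicate (length ys) reset_prog)) IP
           (cascade_delta (replicate (length ys) reset_prog) (reset_feedforward ys P))"
proof (rule in_IS_intro[OF _ _ assms(5) subset_refl])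
  show "inj_on (char_vector ys) (Pow \<Gamma>)" using inj_on_char_vector assms(3) by blast
  show "char_vector ys ` Pow \<Gamma> \<subseteq> cascade_states (replicate (length ys) reset_prog)"
    using char_vector_in_cascade_states by blast
  show "Pow \<Gamma> \<noteq> {}" by blast
  show "Psi P I J \<in> Pow \<Gamma>" for I J using Psi_subset_atoms[OF assms(1)] by blast
  have "\<forall>r\<in>P. Bpos r \<subseteq> set ys" using assms(1,3) by (simp add: program_def)
  then show "char_vector ys (Psi P I J) = cascade_delta (replicate (length ys) reset_prog)
               (reset_feedforward ys P) (char_vector ys I) (h2 J)" for I J
    using cascade_delta_char_vector[OF assms(4) _ assms(2)] by metis
qed

theorem theorem5p3:
  fixes \<Gamma> :: "'a set" and P :: "'a rule set"
  assumes "program \<Gamma> P" and "positive P" and "tight P"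
  shows "\<exists>k::nat. k \<ge> 1 \<and> (\<exists>(IP :: nat set) \<psi>. finite IP \<and> IP \<noteq> {} \<and>
           feedforward (replicate k reset_prog) IP \<psi> \<and>
           in_IS (Pow \<Gamma>) (Pow \<Gamma>) (Psi P)
                 (cascade_states (replicate k reset_prog)) IP
                 (cascade_delta (replicate k reset_prog) \<psi>))"
proof -
  have "finite \<Gamma>" "\<Gamma> \<noteq> {}" using assms(1) by (auto simp: program_def)
  obtain ys where ys: "set ys = \<Gamma>" "level_ordered ys P"
    using tight_level_ordered[OF \<open>finite \<Gamma>\<close> assms(3)] by blast
  obtain h2 where h2: "bij_betw h2 (Pow \<Gamma>) {0..<card (Pow \<Gamma>)}"
    using ex_bij_betw_finite_nat \<open>finite \<Gamma>\<close> by blast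
  have "{0..<card (Pow \<Gamma>)} \<noteq> {}" using \<open>finite \<Gamma>\<close> by (auto simp: card_gt_0_iff)
  moreover have "length ys \<ge> 1" using ys(1) \<open>\<Gamma> \<noteq> {}\<close> by (cases ys) auto
  moreover note feedforward_reset_feedforward in_IS_reset_cascade[OF assms(1,2) ys h2]
  ultimately show ?thesis
    by (intro exI[of _ "length ys"] exI[of _ "{0..<card (Pow \<Gamma>)}"]
          exI[of _ "reset_feedforward ys P"] conjI) simp_all
qed

end
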